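(* Let $\Omega\subset\mathbb{R}^n$ be a non-empty, bounded, connected, open set with closure $\overline{\Omega}$. Let $J\in C(\overline{\Omega}\times\overline{\Omega})$, let $S\in C^\infty(\mathbb{R})$ have bounded $k$th derivative for every $k\in\{0,1,2,\dots\}$, let $\tau\in C(\overline{\Omega}\times\overline{\Omega})$ be non-negative and not identically zero, and let $\alpha>0$. Put $h:=\sup_{\overline{\Omega}\times\overline{\Omega}}\tau$, $Y:=C(\overline{\Omega})$ and $X:=C([-h,0];Y)$ (supremum norms), and define $G:X\to Y$ by $G(\phi)(\mathbf{r})=\int_{\overline{\Omega}}J(\mathbf{r},\mathbf{r}')S(\phi(-\tau(\mathbf{r},\mathbf{r}'),\mathbf{r}'))\,d\mathbf{r}'$. Then for every $\phi\in X$ the problem $$\dot V(t)=-\alpha V(t)+G(V_t)\ (t\ge0),\qquad V(t)=\phi(t)\ (t\in[-h,0])$$ has a unique global solution.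
   Context: For $\phi\in X$ write $\phi(t,\mathbf{r}):=\phi(t)(\mathbf{r})$. For a function $V:[-h,\infty)\to Y$ and $t\ge0$, the history $V_t\in X$ is $V_t(\theta):=V(t+\theta)$, $\theta\in[-h,0]$. A global solution is a function $V\in C([-h,\infty);Y)\cap C^1([0,\infty);Y)$ satisfying the differential equation for all $t\ge0$ and the initial condition on $[-h,0]$. *)

theory Defs
  imports "HOL-Analysis.Analysis"
begin

text \<open>Elements of Y = C(K) (K = closure of Omega) are represented by functions
  'a => real that are continuous on K; only their values on K matter.
  Y-valued functions of time are represented by V :: real => 'a => real.\<close>

definition supn :: "'a set \<Rightarrow> ('a \<Rightarrow> real) \<Rightarrow> real" where
  "supn K f = (SUP x\<in>K. \<bar>f x\<bar>)"

definition ycont_on :: "real set \<Rightarrow> 'a::metric_space set \<Rightarrow> (real \<Rightarrow> 'a \<Rightarrow> real) \<Rightarrow> bool" where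
  "ycont_on T K V \<longleftrightarrow>
     (\<forall>t\<in>T. continuous_on K (V t)) \<and>
     (\<forall>t\<in>T. \<forall>e>0. \<exists>d>0. \<forall>s\<in>T. \<bar>s - t\<bar> < d \<longrightarrow> supn K (\<lambda>x. V s x - V t x) < e)"

definition yhas_deriv :: "'a set \<Rightarrow> (real \<Rightarrow> 'a \<Rightarrow> real) \<Rightarrow> ('a \<Rightarrow> real) \<Rightarrow> real \<Rightarrow> real set \<Rightarrow> bool" where
  "yhas_deriv K V D t T \<longleftrightarrow>
     ((\<lambda>s. supn K (\<lambda>x. (V s x - V t x) / (s - t) - D x)) \<longlongrightarrow> 0) (at t within T)"

definition Gdelay :: "'a::euclidean_space set \<Rightarrow> ('a \<Rightarrow> 'a \<Rightarrow> real) \<Rightarrow> (real \<Rightarrow> real)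
    \<Rightarrow> ('a \<Rightarrow> 'a \<Rightarrow> real) \<Rightarrow> (real \<Rightarrow> 'a \<Rightarrow> real) \<Rightarrow> real \<Rightarrow> 'a \<Rightarrow> real" where
  "Gdelay K J S \<tau> V t r = integral K (\<lambda>r'. J r r' * S (V (t - \<tau> r r') r'))"

definition global_solution :: "'a::euclidean_space set \<Rightarrow> real \<Rightarrow> ('a \<Rightarrow> 'a \<Rightarrow> real) \<Rightarrow> (real \<Rightarrow> real)
    \<Rightarrow> ('a \<Rightarrow> 'a \<Rightarrow> real) \<Rightarrow> real \<Rightarrow> (real \<Rightarrow> 'a \<Rightarrow> real) \<Rightarrow> (real \<Rightarrow> 'a \<Rightarrow> real) \<Rightarrow> bool" where
  "global_solution K \<alpha> J S \<tau> h \<phi> V \<longleftrightarrow>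
     ycont_on {-h..} K V \<and>
     (\<exists>V'. ycont_on {0..} K V' \<and>
        (\<forall>t\<ge>0. yhas_deriv K V (V' t) t {0..}) \<and>
        (\<forall>t\<ge>0. \<forall>r\<in>K. V' t r = - \<alpha> * V t r + Gdelay K J S \<tau> V t r)) \<and>
     (\<forall>t\<in>{-h..0}. \<forall>r\<in>K. V t r = \<phi> t r)"

end

theory Submission
  imports Defs
begin

text \<open>
  On a compact set, continuity into \<open>C(K)\<close> with the sup norm is joint continuity in
  time and space, so global solutions are exactly the jointly continuous fixed points of
  the Picard operator \<open>P V t = \<phi> (min t 0) + \<integral> over [0, max t 0] of (-\<alpha> V s + G V s) ds\<close>.
  As \<open>S\<close> is Lipschitz and the delays are non-negative, \<open>G V s\<close> depends only on \<open>V\<close>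
  on \<open>[-h, s]\<close>, with Lipschitz constant \<open>L = sup |J| * Lip S * |\<Omega>|\<close>. So with
  \<open>c = \<alpha> + L\<close>: if \<open>|V - W| \<le> k s^n\<close> at all times \<open>s \<le> t\<close>, then
  \<open>|P V - P W| \<le> c k t^(n+1) / (n+1)\<close> at time \<open>t\<close>. Iterating this Volterra estimate,
  consecutive Picard iterates differ by at most \<open>B c^n t^(n+1) / (n+1)!\<close>, so they
  converge locally uniformly to a fixed point, and two fixed points differ by at most
  \<open>E (c t)^n / n!\<close> for every \<open>n\<close>, hence coincide.
\<close>

lemma continuous_on_compose_curried:
  assumes g: "continuous_on (A \<times> B) (\<lambda>(x, y). g x y)"
    and "continuous_on U a" "continuous_on U b"
    and "\<And>u. u \<in> U \<Longrightarrow> a u \<in> A" "\<And>u. u \<in> U \<Longrightarrow> b u \<in> B"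
  shows "continuous_on U (\<lambda>u. g (a u) (b u))"
proof -
  have "continuous_on U (\<lambda>u. (\<lambda>(x, y). g x y) (a u, b u))"
    by (rule continuous_on_compose2[OF g]) (use assms in \<open>auto intro!: continuous_intros\<close>)
  then show ?thesis by simp
qed

lemma continuous_on_compact_abs_bound:
  fixes f :: "'b::topological_space \<Rightarrow> real"
  assumes "compact A" "continuous_on A f"
  obtains M where "M \<ge> 0" "\<And>x. x \<in> A \<Longrightarrow> \<bar>f x\<bar> \<le> M"
proof -
  have "bounded (f ` A)" by (rule compact_imp_bounded[OF compact_continuous_image[OF assms(2,1)]])
  then obtain M where "\<forall>y\<in>f ` A. norm y \<le> M" unfolding bounded_iff by blast
  then show ?thesis using that[of "max M 0"] by fastforce
qed

lemma continuous_on_compact_le_SUP: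
  fixes f :: "'b::topological_space \<Rightarrow> real"
  assumes "compact A" "continuous_on A f" "x \<in> A"
  shows "f x \<le> (SUP y\<in>A. f y)"
  using assms by (intro cSUP_upper bounded_imp_bdd_above compact_imp_bounded compact_continuous_image)

lemma bounded_deriv_imp_lipschitz_on:
  fixes S :: "real \<Rightarrow> real"
  assumes "\<And>x. S differentiable (at x)" and "bounded (range (deriv S))"
  obtains L where "L-lipschitz_on UNIV S"
proof -
  obtain L where L: "\<And>x. \<bar>deriv S x\<bar> \<le> L" using assms(2) unfolding bounded_iff by auto
  have "L-lipschitz_on UNIV S"
  proof (rule lipschitz_onI)
    show "dist (S x) (S y) \<le> L * dist x y" for x y
      using field_differentiable_bound[of UNIV S "deriv S" L x y] assms(1) L
      by (simp add: DERIV_deriv_iff_real_differentiable dist_real_def)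
    show "0 \<le> L" using L[of 0] by linarith
  qed
  then show ?thesis by (rule that)
qed

lemma integrable_continuous_on_compact:
  fixes f :: "'a::euclidean_space \<Rightarrow> real"
  assumes K: "compact K" and f: "continuous_on K f"
  shows "f integrable_on K"
proof -
  obtain B where B: "\<And>x. x \<in> K \<Longrightarrow> \<bar>f x\<bar> \<le> B"
    using continuous_on_compact_abs_bound[OF K f] by blast
  have Kl: "K \<in> lmeasurable" using K by (rule lmeasurable_compact)
  have "f absolutely_integrable_on K"
    by (rule measurable_bounded_by_integrable_imp_absolutely_integrable[where g="\<lambda>_. B"])
       (use B Kl f in \<open>auto intro: continuous_imp_measurable_on_sets_lebesgue integrable_on_const\<close>)
  then show ?thesis using absolutely_integrable_on_def by blast
qed

lemma abs_integral_compact_le: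
  fixes f :: "'a::euclidean_space \<Rightarrow> real"
  assumes K: "compact K" and f: "continuous_on K f" and B: "\<And>x. x \<in> K \<Longrightarrow> \<bar>f x\<bar> \<le> B"
  shows "\<bar>integral K f\<bar> \<le> B * measure lebesgue K"
proof -
  have Kl: "K \<in> lmeasurable" using K by (rule lmeasurable_compact)
  have "norm (integral K f) \<le> integral K (\<lambda>_. B)"
    by (rule integral_norm_bound_integral)
       (use B Kl integrable_continuous_on_compact[OF K f] in \<open>auto intro: integrable_on_const\<close>)
  also have "integral K (\<lambda>_. B) = B * measure lebesgue K"
    using lmeasure_integral[OF Kl] integral_mult_right[of K B "\<lambda>_. 1"] by simp
  finally show ?thesis by simp
qed

lemma continuous_on_parametric_integral:
  fixes g :: "'u::metric_space \<Rightarrow> 'a::euclidean_space \<Rightarrow> real"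
  assumes C: "compact C" and g: "continuous_on (U \<times> C) (\<lambda>(u, x). g u x)"
  shows "continuous_on U (\<lambda>u. integral C (g u))"
  unfolding continuous_on_iff
proof (intro ballI allI impI)
  fix u0 and e :: real assume u0: "u0 \<in> U" and e: "e > 0"
  define m where "m = measure lebesgue C"
  define e' where "e' = e / (m + 1)"
  have m0: "m \<ge> 0" unfolding m_def by simp
  then have e': "e' > 0" using e unfolding e'_def by simp
  obtain X0 where X0: "u0 \<in> X0" "open X0"
      "\<forall>u\<in>X0 \<inter> U. \<forall>x\<in>C. dist (g u x) (g u0 x) \<le> e'"
    using continuous_on_prod_compactE[OF g C u0 e'] by auto
  obtain d where d: "d > 0" "ball u0 d \<subseteq> X0" using X0 open_contains_ball by blast
  have slice: "continuous_on C (g u)" if "u \<in> U" for u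
    by (rule continuous_on_compose_curried[OF g]) (use that in \<open>auto intro!: continuous_intros\<close>)
  show "\<exists>d>0. \<forall>u\<in>U. dist u u0 < d \<longrightarrow> dist (integral C (g u)) (integral C (g u0)) < e"
  proof (intro exI conjI ballI impI)
    fix u assume u: "u \<in> U" "dist u u0 < d"
    then have "u \<in> X0" using d by (auto simp: dist_commute)
    have "\<bar>integral C (\<lambda>x. g u x - g u0 x)\<bar> \<le> e' * m"
      unfolding m_def
      by (rule abs_integral_compact_le[OF C])
         (use slice u u0 X0 \<open>u \<in> X0\<close> in \<open>auto intro!: continuous_intros simp: dist_real_def\<close>)
    also have "\<dots> < e" unfolding e'_def using e m0 by (simp add: field_simps)
    finally show "dist (integral C (g u)) (integral C (g u0)) < e"
      using integral_diff[OF integrable_continuous_on_compact[OF C slice[OF u(1)]]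
                             integrable_continuous_on_compact[OF C slice[OF u0]]]
      by (simp add: dist_real_def)
  qed (use d in auto)
qed

lemma supn_le:
  assumes "K \<noteq> {}" "\<And>x. x \<in> K \<Longrightarrow> \<bar>f x\<bar> \<le> B"
  shows "supn K f \<le> B"
  unfolding supn_def using assms by (intro cSUP_least) auto

lemma abs_le_supn:
  assumes "compact K" "continuous_on K f" "x \<in> K"
  shows "\<bar>f x\<bar> \<le> supn K f"
  unfolding supn_def
  by (rule continuous_on_compact_le_SUP[where f="\<lambda>x. \<bar>f x\<bar>"]) (use assms in \<open>auto intro!: continuous_intros\<close>)

lemma abs_supn_le:
  assumes "compact K" "K \<noteq> {}" "continuous_on K f" "\<And>x. x \<in> K \<Longrightarrow> \<bar>f x\<bar> \<le> B"
  shows "\<bar>supn K f\<bar> \<le> B"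
proof -
  obtain x where "x \<in> K" using assms(2) by blast
  then have "0 \<le> supn K f" using abs_le_supn[OF assms(1,3)] by fastforce
  then show ?thesis using supn_le[OF assms(2,4)] by simp
qed

lemma ycont_on_imp_continuous_on_Times:
  assumes K: "compact K" and V: "ycont_on T K V"
  shows "continuous_on (T \<times> K) (\<lambda>(t, x). V t x)"
  unfolding continuous_on_iff
proof (intro ballI allI impI)
  fix p and e :: real assume p: "p \<in> T \<times> K" and e: "e > 0"
  obtain t x where tx: "p = (t, x)" "t \<in> T" "x \<in> K" using p by auto
  have ct: "continuous_on K (V t)" using V tx unfolding ycont_on_def by auto
  obtain d1 where d1: "d1 > 0" "\<forall>s\<in>T. \<bar>s - t\<bar> < d1 \<longrightarrow> supn K (\<lambda>x. V s x - V t x) < e/2"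
    using V tx e unfolding ycont_on_def by (meson half_gt_zero)
  obtain d2 where d2: "d2 > 0" "\<forall>y\<in>K. dist y x < d2 \<longrightarrow> dist (V t y) (V t x) < e/2"
    using ct tx e unfolding continuous_on_iff by (meson half_gt_zero)
  show "\<exists>d>0. \<forall>p'\<in>T \<times> K. dist p' p < d \<longrightarrow> dist ((\<lambda>(t, x). V t x) p') ((\<lambda>(t, x). V t x) p) < e"
  proof (intro exI conjI ballI impI)
    fix p' assume p': "p' \<in> T \<times> K" "dist p' p < min d1 d2"
    obtain s y where sy: "p' = (s, y)" "s \<in> T" "y \<in> K" using p' by auto
    have "dist s t < d1" using p'(2) dist_fst_le[of p' p] sy tx by auto
    then have "supn K (\<lambda>x. V s x - V t x) < e/2" using d1 sy by (simp add: dist_real_def)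
    moreover have "\<bar>V s y - V t y\<bar> \<le> supn K (\<lambda>x. V s x - V t x)"
      by (rule abs_le_supn[OF K(1) _ sy(3)])
         (use V ct sy in \<open>auto intro!: continuous_intros simp: ycont_on_def\<close>)
    moreover have "dist y x < d2" using p'(2) dist_snd_le[of p' p] sy tx by auto
    then have "\<bar>V t y - V t x\<bar> < e/2" using d2 sy by (simp add: dist_real_def)
    ultimately show "dist ((\<lambda>(t, x). V t x) p') ((\<lambda>(t, x). V t x) p) < e"
      using sy tx by (simp add: dist_real_def) (smt (verit))
  qed (use d1 d2 in auto)
qed

lemma continuous_on_Times_imp_ycont_on:
  assumes K: "compact K" "K \<noteq> {}" and V: "continuous_on (T \<times> K) (\<lambda>(t, x). V t x)"
  shows "ycont_on T K V"
  unfolding ycont_on_def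
proof (intro conjI ballI allI impI)
  fix t assume "t \<in> T"
  then show "continuous_on K (V t)"
    by (intro continuous_on_compose_curried[OF V]) (auto intro!: continuous_intros)
next
  fix t and e :: real assume t: "t \<in> T" and e: "e > 0"
  obtain X0 where X0: "t \<in> X0" "open X0" "\<forall>s\<in>X0 \<inter> T. \<forall>x\<in>K. dist (V s x) (V t x) \<le> e/2"
    using continuous_on_prod_compactE[OF V K(1) t, of "e/2"] e by auto
  obtain d where d: "d > 0" "ball t d \<subseteq> X0" using X0 open_contains_ball by blast
  show "\<exists>d>0. \<forall>s\<in>T. \<bar>s - t\<bar> < d \<longrightarrow> supn K (\<lambda>x. V s x - V t x) < e"
  proof (intro exI conjI ballI impI)
    fix s assume s: "s \<in> T" "\<bar>s - t\<bar> < d"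
    then have "s \<in> X0" using d by (auto simp: dist_real_def)
    then have "supn K (\<lambda>x. V s x - V t x) \<le> e/2"
      using X0(3) s K(2) by (intro supn_le) (auto simp: dist_real_def)
    then show "supn K (\<lambda>x. V s x - V t x) < e" using e by simp
  qed (use d in auto)
qed

lemma ycont_on_iff_continuous_on_Times:
  assumes "compact K" "K \<noteq> {}"
  shows "ycont_on T K V \<longleftrightarrow> continuous_on (T \<times> K) (\<lambda>(t, x). V t x)"
  using ycont_on_imp_continuous_on_Times continuous_on_Times_imp_ycont_on assms by blast

lemma continuous_on_atLeast_Times:
  fixes f :: "real \<times> 'a::metric_space \<Rightarrow> 'b::metric_space"
  assumes "\<And>T. continuous_on ({a..T} \<times> K) f"
  shows "continuous_on ({a..} \<times> K) f"
  unfolding continuous_on_iff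
proof (intro ballI allI impI)
  fix p and e :: real assume p: "p \<in> {a..} \<times> K" and e: "e > 0"
  obtain t x where tx: "p = (t, x)" "t \<ge> a" "x \<in> K" using p by auto
  obtain d where d: "d > 0" "\<forall>p'\<in>{a..t+1} \<times> K. dist p' p < d \<longrightarrow> dist (f p') (f p) < e"
    using assms[of "t+1"] e tx unfolding continuous_on_iff by fastforce
  show "\<exists>d>0. \<forall>p'\<in>{a..} \<times> K. dist p' p < d \<longrightarrow> dist (f p') (f p) < e"
  proof (intro exI conjI ballI impI)
    fix p' assume p': "p' \<in> {a..} \<times> K" "dist p' p < min d 1"
    have "dist (fst p') t < 1" using p'(2) dist_fst_le[of p' p] tx by auto
    then have "p' \<in> {a..t+1} \<times> K" using p' by (auto simp: mem_Times_iff dist_real_def)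
    then show "dist (f p') (f p) < e" using d p' by auto
  qed (use d in auto)
qed

lemma integral_0_power:
  assumes "0 \<le> (t::real)"
  shows "integral {0..t} (\<lambda>u. u ^ k) = t ^ Suc k / Suc k"
proof -
  have "((\<lambda>u. u ^ k) has_integral (t ^ Suc k / Suc k - 0 ^ Suc k / Suc k)) {0..t}"
  proof (rule fundamental_theorem_of_calculus[OF assms])
    fix x assume "x \<in> {0..t}"
    have "((\<lambda>u. u ^ Suc k / Suc k) has_real_derivative x ^ k) (at x within {0..t})"
      by (intro derivative_eq_intros) (auto simp: field_simps simp del: of_nat_Suc)
    then show "((\<lambda>u. u ^ Suc k / Suc k) has_vector_derivative x ^ k) (at x within {0..t})"
      by (simp add: has_real_derivative_iff_has_vector_derivative)
  qed
  then show ?thesis by (simp add: integral_unique)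
qed

lemma integral_0_diff:
  fixes f :: "real \<Rightarrow> real"
  assumes "continuous_on {0..b} f" "0 \<le> s" "s \<le> t" "t \<le> b"
  shows "integral {0..t} f - integral {0..s} f = integral {s..t} f"
proof -
  have "f integrable_on {0..t}"
    by (rule integrable_continuous_interval, rule continuous_on_subset[OF assms(1)])
       (use assms in auto)
  from Henstock_Kurzweil_Integration.integral_combine[OF assms(2,3) this] show ?thesis by simp
qed

lemma abs_integral_0_diff_le:
  fixes f :: "real \<Rightarrow> real"
  assumes f: "continuous_on {0..b} f" and st: "0 \<le> s" "s \<le> b" "0 \<le> t" "t \<le> b"
    and M: "\<And>u. u \<in> {0..b} \<Longrightarrow> \<bar>f u\<bar> \<le> M"
  shows "\<bar>integral {0..s} f - integral {0..t} f\<bar> \<le> M * \<bar>s - t\<bar>"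
proof -
  have "\<bar>integral {0..y} f - integral {0..x} f\<bar> \<le> M * (y - x)"
    if "0 \<le> x" "x \<le> y" "y \<le> b" for x y
    using integral_0_diff[OF f that] M that continuous_on_subset[OF f, of "{x..y}"]
      Henstock_Kurzweil_Integration.integral_bound[where a=x and b=y and f=f and B=M]
    by auto
  from this[of s t] this[of t s] st show ?thesis
    by (cases "s \<le> t") (auto simp: abs_minus_commute)
qed

lemma abs_integral_average_le:
  fixes f :: "real \<Rightarrow> real"
  assumes ab: "a < b" and f: "continuous_on {a..b} f"
    and e: "\<And>u. u \<in> {a..b} \<Longrightarrow> \<bar>f u - y\<bar> \<le> e"
  shows "\<bar>integral {a..b} f / (b - a) - y\<bar> \<le> e"
proof -
  have "integral {a..b} f - (b - a) * y = integral {a..b} (\<lambda>u. f u - y)"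
    using integral_diff[OF integrable_continuous_interval[OF f] integrable_const_ivl[of y a b]] ab
    by simp
  also have "norm \<dots> \<le> e * (b - a)"
    by (rule Henstock_Kurzweil_Integration.integral_bound)
       (use ab e in \<open>auto intro!: continuous_intros f\<close>)
  finally have "\<bar>integral {a..b} f - (b - a) * y\<bar> \<le> e * (b - a)" by simp
  moreover have "integral {a..b} f / (b - a) - y = (integral {a..b} f - (b - a) * y) / (b - a)"
    using ab by (simp add: field_simps)
  ultimately show ?thesis using ab by (simp add: abs_div pos_divide_le_eq)
qed

lemma abs_integral_0_difference_quotient_le:
  fixes f :: "real \<Rightarrow> real"
  assumes f: "continuous_on {0..b} f" and st: "0 \<le> s" "s \<le> b" "0 \<le> t" "t \<le> b" "s \<noteq> t"
    and e: "\<And>u. u \<in> {min s t..max s t} \<Longrightarrow> \<bar>f u - f t\<bar> \<le> e"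
  shows "\<bar>(integral {0..s} f - integral {0..t} f) / (s - t) - f t\<bar> \<le> e"
proof (cases "t < s")
  case True
  show ?thesis
    unfolding integral_0_diff[OF f st(3) less_imp_le[OF True] st(2)]
    by (rule abs_integral_average_le[OF True]) (use st e True in \<open>auto intro: continuous_on_subset[OF f]\<close>)
next
  case False
  then have ts: "s < t" using st by simp
  have "(integral {0..s} f - integral {0..t} f) / (s - t) = integral {s..t} f / (t - s)"
    using integral_0_diff[OF f st(1) less_imp_le[OF ts] st(4)] ts by (simp add: field_simps)
  then show ?thesis
    by (simp only:) (rule abs_integral_average_le[OF ts], use st e ts in \<open>auto intro: continuous_on_subset[OF f]\<close>)
qed

lemma continuous_on_integral_0_Times:
  fixes \<Phi> :: "real \<Rightarrow> 'a::euclidean_space \<Rightarrow> real"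
  assumes K: "compact K" "K \<noteq> {}" and \<Phi>: "continuous_on ({0..} \<times> K) (\<lambda>(s, r). \<Phi> s r)"
  shows "continuous_on ({0..} \<times> K) (\<lambda>(t, r). integral {0..t} (\<lambda>s. \<Phi> s r))"
  unfolding ycont_on_iff_continuous_on_Times[OF K, symmetric] ycont_on_def
proof (intro conjI ballI allI impI)
  fix t :: real assume t: "t \<in> {0..}"
  have "continuous_on (K \<times> {0..t}) (\<lambda>p. \<Phi> (snd p) (fst p))"
    by (rule continuous_on_compose_curried[OF \<Phi>]) (auto intro!: continuous_intros)
  then have "continuous_on (K \<times> {0..t}) (\<lambda>(r, s). \<Phi> s r)" by (simp add: case_prod_beta)
  from continuous_on_parametric_integral[OF _ this]
  show "continuous_on K (\<lambda>r. integral {0..t} (\<lambda>s. \<Phi> s r))" by simp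
next
  fix t e :: real assume t: "t \<in> {0..}" and e: "e > 0"
  obtain M where M: "M \<ge> 0" "\<And>p. p \<in> {0..t+1} \<times> K \<Longrightarrow> \<bar>(\<lambda>(s, r). \<Phi> s r) p\<bar> \<le> M"
    by (rule continuous_on_compact_abs_bound[of "{0..t+1} \<times> K" "\<lambda>(s, r). \<Phi> s r"])
       (use K(1) in \<open>auto intro: compact_Times continuous_on_subset[OF \<Phi>]\<close>)
  define d where "d = min 1 (e / (M + 1))"
  have d: "d > 0" unfolding d_def using e M by simp
  show "\<exists>d>0. \<forall>s\<in>{0..}. \<bar>s - t\<bar> < d \<longrightarrow>
          supn K (\<lambda>r. integral {0..s} (\<lambda>s. \<Phi> s r) - integral {0..t} (\<lambda>s. \<Phi> s r)) < e"
  proof (intro exI conjI ballI impI)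
    fix s assume s: "s \<in> {0..}" "\<bar>s - t\<bar> < d"
    have "supn K (\<lambda>r. integral {0..s} (\<lambda>s. \<Phi> s r) - integral {0..t} (\<lambda>s. \<Phi> s r)) \<le> M * \<bar>s - t\<bar>"
    proof (rule supn_le[OF K(2)], rule abs_integral_0_diff_le[where b="t+1"])
      fix r assume r: "r \<in> K"
      show "continuous_on {0..t + 1} (\<lambda>s. \<Phi> s r)"
        by (rule continuous_on_compose_curried[OF \<Phi>]) (use r in \<open>auto intro!: continuous_intros\<close>)
      show "\<bar>\<Phi> u r\<bar> \<le> M" if "u \<in> {0..t+1}" for u using M(2)[of "(u, r)"] r that by simp
    qed (use s t d_def in auto)
    also have "\<dots> \<le> M * (e / (M + 1))"
      using s M unfolding d_def by (intro mult_left_mono) auto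
    also have "\<dots> < e" using M e by (simp add: field_simps)
    finally show "supn K (\<lambda>r. integral {0..s} (\<lambda>s. \<Phi> s r) - integral {0..t} (\<lambda>s. \<Phi> s r)) < e" .
  qed (use d in auto)
qed

lemma yhas_deriv_integral_0:
  fixes \<Phi> :: "real \<Rightarrow> 'a::euclidean_space \<Rightarrow> real"
  assumes K: "compact K" "K \<noteq> {}" and \<Phi>: "continuous_on ({0..} \<times> K) (\<lambda>(s, r). \<Phi> s r)"
    and V: "\<And>s r. 0 \<le> s \<Longrightarrow> r \<in> K \<Longrightarrow> V s r = V 0 r + integral {0..s} (\<lambda>u. \<Phi> u r)"
    and t: "0 \<le> t"
  shows "yhas_deriv K V (\<Phi> t) t {0..}"
  unfolding yhas_deriv_def
proof (rule tendstoI)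
  fix e :: real assume e: "e > 0"
  obtain X0 where X0: "t \<in> X0" "open X0" "\<forall>u\<in>X0 \<inter> {0..}. \<forall>r\<in>K. dist (\<Phi> u r) (\<Phi> t r) \<le> e/2"
    using continuous_on_prod_compactE[OF \<Phi> K(1), of t "e/2"] e t by auto
  obtain d where d: "d > 0" "ball t d \<subseteq> X0" using X0 open_contains_ball by blast
  show "\<forall>\<^sub>F s in at t within {0..}. dist (supn K (\<lambda>r. (V s r - V t r) / (s - t) - \<Phi> t r)) 0 < e"
    unfolding eventually_at
  proof (intro exI[of _ d] conjI ballI impI)
    fix s :: real assume s: "s \<in> {0..}" "s \<noteq> t \<and> dist s t < d"
    have Vdiff: "V s r - V t r = integral {0..s} (\<lambda>u. \<Phi> u r) - integral {0..t} (\<lambda>u. \<Phi> u r)"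
      if "r \<in> K" for r
    proof -
      have "V s r = V 0 r + integral {0..s} (\<lambda>u. \<Phi> u r)" "V t r = V 0 r + integral {0..t} (\<lambda>u. \<Phi> u r)"
        by (rule V; use that s t in simp)+
      then show ?thesis by simp
    qed
    have slice: "continuous_on {0..max s t} (\<lambda>u. \<Phi> u r)" if "r \<in> K" for r
      by (rule continuous_on_compose_curried[OF \<Phi>]) (use that in \<open>auto intro!: continuous_intros\<close>)
    have I: "continuous_on K (\<lambda>r. integral {0..x} (\<lambda>u. \<Phi> u r))" if "0 \<le> x" for x
      by (rule continuous_on_compose_curried[OF continuous_on_integral_0_Times[OF K \<Phi>]])
         (use that in \<open>auto intro!: continuous_intros\<close>)
    have "continuous_on K (\<lambda>r. (integral {0..s} (\<lambda>u. \<Phi> u r) - integral {0..t} (\<lambda>u. \<Phi> u r)) / (s - t) - \<Phi> t r)"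
      using I[of s] I[of t] continuous_on_compose_curried[OF \<Phi>, of K "\<lambda>_. t" "\<lambda>r. r"] s t
      by (intro continuous_intros) auto
    then have "continuous_on K (\<lambda>r. (V s r - V t r) / (s - t) - \<Phi> t r)"
      by (rule continuous_on_eq) (simp add: Vdiff)
    then have "\<bar>supn K (\<lambda>r. (V s r - V t r) / (s - t) - \<Phi> t r)\<bar> \<le> e/2"
    proof (rule abs_supn_le[OF K])
      fix r assume r: "r \<in> K"
      have "\<bar>(integral {0..s} (\<lambda>u. \<Phi> u r) - integral {0..t} (\<lambda>u. \<Phi> u r)) / (s - t) - \<Phi> t r\<bar> \<le> e/2"
      proof (rule abs_integral_0_difference_quotient_le[OF slice[OF r]])
        fix u assume u: "u \<in> {min s t..max s t}"
        then have "u \<in> X0" using s d by (auto simp: dist_real_def)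
        then show "\<bar>\<Phi> u r - \<Phi> t r\<bar> \<le> e/2"
          using X0(3) r u s t by (auto simp: dist_real_def)
      qed (use s t in auto)
      then show "\<bar>(V s r - V t r) / (s - t) - \<Phi> t r\<bar> \<le> e/2" by (simp add: Vdiff r)
    qed
    then show "dist (supn K (\<lambda>r. (V s r - V t r) / (s - t) - \<Phi> t r)) 0 < e" using e by simp
  qed (use d in auto)
qed

lemma yhas_deriv_imp_has_real_derivative:
  assumes K: "compact K" and der: "yhas_deriv K V D t T"
    and cont: "\<And>s. s \<in> T \<Longrightarrow> continuous_on K (V s)" "continuous_on K D"
    and t: "t \<in> T" and r: "r \<in> K"
  shows "((\<lambda>s. V s r) has_real_derivative D r) (at t within T)"
proof -
  have "norm ((V s r - V t r) / (s - t) - D r) \<le> supn K (\<lambda>x. (V s x - V t x) / (s - t) - D x)"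
    if "s \<in> T" "s \<noteq> t" for s
    unfolding real_norm_def
    by (rule abs_le_supn[OF K _ r]) (use cont t that in \<open>auto intro!: continuous_intros\<close>)
  then have "\<forall>\<^sub>F s in at t within T. norm ((V s r - V t r) / (s - t) - D r)
          \<le> supn K (\<lambda>x. (V s x - V t x) / (s - t) - D x)"
    by (auto simp: eventually_at_filter intro: always_eventually)
  from Lim_null_comparison[OF this der[unfolded yhas_deriv_def]]
  have "((\<lambda>s. ((V s r - V t r) / (s - t) - D r) + D r) \<longlongrightarrow> 0 + D r) (at t within T)"
    by (intro tendsto_add tendsto_const)
  then show ?thesis unfolding has_field_derivative_iff by simp
qed

lemma summable_exp_majorant:
  fixes B c T :: real
  assumes "0 \<le> B" "0 \<le> c" "0 \<le> T"
  shows "summable (\<lambda>i. B * c ^ i * T ^ Suc i / fact (Suc i))"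
proof (rule summable_comparison_test'[OF summable_mult[OF summable_exp[of "c * T"], of "B * T"]])
  fix i :: nat
  have "B * c ^ i * T ^ Suc i / fact (Suc i) = B * T * (c * T) ^ i / fact (Suc i)"
    by (simp add: power_mult_distrib mult_ac)
  also have "\<dots> \<le> B * T * (c * T) ^ i / fact i"
    using assms by (intro divide_left_mono fact_mono) auto
  finally show "norm (B * c ^ i * T ^ Suc i / fact (Suc i)) \<le> B * T * (inverse (fact i) * (c * T) ^ i)"
    using assms by (simp add: divide_inverse mult_ac)
qed

lemma fact_Suc_step:
  fixes c E x :: real
  shows "c * (E * c ^ n / fact m) * x / Suc m = E * c ^ Suc n * x / fact (Suc m)"
  by (simp add: field_simps)

subsection \<open>The delay problem as a fixed-point problem\<close>

locale delay_problem =
  fixes K :: "'a::euclidean_space set" and J \<tau> :: "'a \<Rightarrow> 'a \<Rightarrow> real" and S :: "real \<Rightarrow> real"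
    and \<alpha> h MJ MS LS :: real and \<phi> :: "real \<Rightarrow> 'a \<Rightarrow> real"
  assumes K_compact: "compact K" and K_nonempty: "K \<noteq> {}"
    and J_cont: "continuous_on (K \<times> K) (\<lambda>(r, r'). J r r')"
    and J_bound: "\<And>r r'. r \<in> K \<Longrightarrow> r' \<in> K \<Longrightarrow> \<bar>J r r'\<bar> \<le> MJ"
    and S_bound: "\<And>x. \<bar>S x\<bar> \<le> MS"
    and S_lipschitz: "LS-lipschitz_on UNIV S"
    and tau_cont: "continuous_on (K \<times> K) (\<lambda>(r, r'). \<tau> r r')"
    and tau_range: "\<And>r r'. r \<in> K \<Longrightarrow> r' \<in> K \<Longrightarrow> 0 \<le> \<tau> r r' \<and> \<tau> r r' \<le> h"
    and alpha_nonneg: "\<alpha> \<ge> 0"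
    and phi_cont: "continuous_on ({-h..0} \<times> K) (\<lambda>(t, r). \<phi> t r)"
begin

abbreviation G where "G \<equiv> Gdelay K J S \<tau>"

definition F :: "(real \<Rightarrow> 'a \<Rightarrow> real) \<Rightarrow> real \<Rightarrow> 'a \<Rightarrow> real" where
  "F V s r = - \<alpha> * V s r + G V s r"

definition picard :: "(real \<Rightarrow> 'a \<Rightarrow> real) \<Rightarrow> real \<Rightarrow> 'a \<Rightarrow> real" where
  "picard V t r = \<phi> (min t 0) r + integral {0..max t 0} (\<lambda>s. F V s r)"

definition L :: real where "L = MJ * LS * measure lebesgue K"

definition c :: real where "c = \<alpha> + L"

lemma MJ_nonneg: "MJ \<ge> 0"
  using K_nonempty J_bound by fastforce

lemma MS_nonneg: "MS \<ge> 0"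
  using S_bound[of 0] by linarith

lemma h_nonneg: "h \<ge> 0"
  using K_nonempty tau_range by fastforce

lemma c_nonneg: "c \<ge> 0"
  unfolding c_def L_def
  using alpha_nonneg MJ_nonneg lipschitz_on_nonneg[OF S_lipschitz] by simp

lemma picard_init: "t \<le> 0 \<Longrightarrow> picard V t r = \<phi> t r"
  by (simp add: picard_def)

lemma picard_nonneg: "t \<ge> 0 \<Longrightarrow> picard V t r = \<phi> 0 r + integral {0..t} (\<lambda>s. F V s r)"
  by (simp add: picard_def)

lemma continuous_on_G_integrand:
  assumes V: "continuous_on (B \<times> K) (\<lambda>(t, r). V t r)"
    and "r \<in> K" and "\<And>r'. r' \<in> K \<Longrightarrow> t - \<tau> r r' \<in> B"
  shows "continuous_on K (\<lambda>r'. J r r' * S (V (t - \<tau> r r') r'))"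
  using assms
  by (intro continuous_intros continuous_on_compose_curried[OF J_cont]
      continuous_on_compose2[OF lipschitz_on_continuous_on[OF S_lipschitz]]
      continuous_on_compose_curried[OF V] continuous_on_compose_curried[OF tau_cont]) auto

lemma continuous_on_G:
  assumes V: "continuous_on (B \<times> K) (\<lambda>(t, r). V t r)"
    and AB: "\<And>t r r'. t \<in> A \<Longrightarrow> r \<in> K \<Longrightarrow> r' \<in> K \<Longrightarrow> t - \<tau> r r' \<in> B"
  shows "continuous_on (A \<times> K) (\<lambda>(t, r). G V t r)"
proof -
  define g where "g = (\<lambda>p r'. J (snd p) r' * S (V (fst p - \<tau> (snd p) r') r'))"
  have "continuous_on ((A \<times> K) \<times> K) (\<lambda>q. g (fst q) (snd q))"
    unfolding g_def using AB
    by (intro continuous_intros continuous_on_compose_curried[OF J_cont]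
        continuous_on_compose2[OF lipschitz_on_continuous_on[OF S_lipschitz]]
        continuous_on_compose_curried[OF V] continuous_on_compose_curried[OF tau_cont]) auto
  then have "continuous_on (A \<times> K) (\<lambda>p. integral K (g p))"
    by (intro continuous_on_parametric_integral[OF K_compact]) (simp add: case_prod_beta)
  moreover have "(\<lambda>p. integral K (g p)) = (\<lambda>(t, r). G V t r)"
    by (auto simp: g_def Gdelay_def fun_eq_iff)
  ultimately show ?thesis by metis
qed

lemma abs_G_le:
  assumes V: "continuous_on (B \<times> K) (\<lambda>(t, r). V t r)"
    and r: "r \<in> K" and "\<And>r'. r' \<in> K \<Longrightarrow> t - \<tau> r r' \<in> B"
  shows "\<bar>G V t r\<bar> \<le> MJ * MS * measure lebesgue K"
  unfolding Gdelay_def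
proof (rule abs_integral_compact_le[OF K_compact continuous_on_G_integrand[OF assms]])
  fix x assume x: "x \<in> K"
  have "\<bar>J r x\<bar> * \<bar>S (V (t - \<tau> r x) x)\<bar> \<le> MJ * MS"
    using J_bound[OF r x] S_bound MJ_nonneg by (intro mult_mono) auto
  then show "\<bar>J r x * S (V (t - \<tau> r x) x)\<bar> \<le> MJ * MS" by (simp add: abs_mult)
qed

lemma abs_G_diff_le:
  assumes V: "continuous_on (B \<times> K) (\<lambda>(t, r). V t r)"
    and W: "continuous_on (B \<times> K) (\<lambda>(t, r). W t r)"
    and r: "r \<in> K" and B: "\<And>r'. r' \<in> K \<Longrightarrow> t - \<tau> r r' \<in> B"
    and e: "\<And>r'. r' \<in> K \<Longrightarrow> \<bar>V (t - \<tau> r r') r' - W (t - \<tau> r r') r'\<bar> \<le> e"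
  shows "\<bar>G V t r - G W t r\<bar> \<le> L * e"
proof -
  note cV = continuous_on_G_integrand[OF V r B] and cW = continuous_on_G_integrand[OF W r B]
  have "G V t r - G W t r
      = integral K (\<lambda>r'. J r r' * S (V (t - \<tau> r r') r') - J r r' * S (W (t - \<tau> r r') r'))"
    unfolding Gdelay_def
    by (rule integral_diff[symmetric]; rule integrable_continuous_on_compact[OF K_compact cV]
          integrable_continuous_on_compact[OF K_compact cW])
  also have "\<bar>\<dots>\<bar> \<le> (MJ * (LS * e)) * measure lebesgue K"
  proof (rule abs_integral_compact_le[OF K_compact])
    show "continuous_on K (\<lambda>r'. J r r' * S (V (t - \<tau> r r') r') - J r r' * S (W (t - \<tau> r r') r'))"
      by (intro continuous_intros cV cW)
    fix x assume x: "x \<in> K"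
    have "\<bar>S (V (t - \<tau> r x) x) - S (W (t - \<tau> r x) x)\<bar> \<le> LS * e"
      using lipschitz_onD[OF S_lipschitz, of "V (t - \<tau> r x) x" "W (t - \<tau> r x) x"]
        e[OF x] lipschitz_on_nonneg[OF S_lipschitz]
      by (simp add: dist_real_def) (meson mult_left_mono order_trans)
    then have "\<bar>J r x\<bar> * \<bar>S (V (t - \<tau> r x) x) - S (W (t - \<tau> r x) x)\<bar> \<le> MJ * (LS * e)"
      using J_bound[OF r x] MJ_nonneg by (intro mult_mono) auto
    then show "\<bar>J r x * S (V (t - \<tau> r x) x) - J r x * S (W (t - \<tau> r x) x)\<bar> \<le> MJ * (LS * e)"
      by (simp add: abs_mult right_diff_distrib[symmetric])
  qed
  also have "\<dots> = L * e" unfolding L_def by simp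
  finally show ?thesis .
qed

lemma continuous_on_F:
  assumes V: "continuous_on ({-h..} \<times> K) (\<lambda>(t, r). V t r)"
  shows "continuous_on ({0..} \<times> K) (\<lambda>(s, r). F V s r)"
proof -
  have "continuous_on ({0..} \<times> K) (\<lambda>(t, r). G V t r)"
    by (rule continuous_on_G[OF V]) (use tau_range in force)
  moreover have "continuous_on ({0..} \<times> K) (\<lambda>(t, r). V t r)"
    by (rule continuous_on_subset[OF V]) (use h_nonneg in auto)
  ultimately show ?thesis
    unfolding F_def by (simp add: case_prod_beta continuous_intros)
qed

lemma continuous_on_F_slice:
  assumes V: "continuous_on ({-h..} \<times> K) (\<lambda>(t, r). V t r)" and r: "r \<in> K"
  shows "continuous_on {0..t} (\<lambda>s. F V s r)"
  by (rule continuous_on_compose_curried[OF continuous_on_F[OF V]])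
     (use r in \<open>auto intro!: continuous_intros\<close>)

lemma continuous_on_picard:
  assumes V: "continuous_on ({-h..} \<times> K) (\<lambda>(t, r). V t r)"
  shows "continuous_on ({-h..} \<times> K) (\<lambda>(t, r). picard V t r)"
proof -
  have "continuous_on ({-h..} \<times> K) (\<lambda>p. \<phi> (min (fst p) 0) (snd p))"
    by (rule continuous_on_compose_curried[OF phi_cont])
       (use h_nonneg in \<open>auto intro!: continuous_intros\<close>)
  moreover have "continuous_on ({-h..} \<times> K)
      (\<lambda>p. integral {0..max (fst p) 0} (\<lambda>s. F V s (snd p)))"
    by (rule continuous_on_compose_curried[OF continuous_on_integral_0_Times[OF K_compact K_nonempty
          continuous_on_F[OF V]]])
       (auto intro!: continuous_intros)
  ultimately show ?thesis
    unfolding picard_def by (simp add: case_prod_beta continuous_intros)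
qed

lemma abs_picard_diff_le:
  assumes V: "continuous_on ({-h..} \<times> K) (\<lambda>(t, r). V t r)"
    and W: "continuous_on ({-h..} \<times> K) (\<lambda>(t, r). W t r)"
    and t: "0 \<le> t" and r: "r \<in> K" and f: "continuous_on {0..t} f"
    and mono: "\<And>u v. 0 \<le> u \<Longrightarrow> u \<le> v \<Longrightarrow> v \<le> t \<Longrightarrow> f u \<le> f v"
    and bd: "\<And>s r. s \<in> {-h..t} \<Longrightarrow> r \<in> K \<Longrightarrow> \<bar>V s r - W s r\<bar> \<le> f (max s 0)"
  shows "\<bar>picard V t r - picard W t r\<bar> \<le> c * integral {0..t} f"
proof -
  note iV = integrable_continuous_interval[OF continuous_on_F_slice[OF V r]]
  note iW = integrable_continuous_interval[OF continuous_on_F_slice[OF W r]]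
  have "picard V t r - picard W t r = integral {0..t} (\<lambda>s. F V s r - F W s r)"
    using picard_nonneg[OF t] integral_diff[OF iV iW] by simp
  also have "norm \<dots> \<le> integral {0..t} (\<lambda>s. c * f s)"
  proof (rule Henstock_Kurzweil_Integration.integral_norm_bound_integral)
    show "(\<lambda>s. F V s r - F W s r) integrable_on {0..t}" using iV iW by (rule integrable_diff)
    show "(\<lambda>s. c * f s) integrable_on {0..t}"
      by (rule integrable_continuous_interval) (intro continuous_intros f)
    fix s assume s: "s \<in> {0..t}"
    have "\<bar>G V s r - G W s r\<bar> \<le> L * f s"
    proof (rule abs_G_diff_le[OF V W r])
      fix r' assume r': "r' \<in> K"
      show "s - \<tau> r r' \<in> {-h..}" using tau_range[OF r r'] s by auto
      have "\<bar>V (s - \<tau> r r') r' - W (s - \<tau> r r') r'\<bar> \<le> f (max (s - \<tau> r r') 0)"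
        using bd[OF _ r'] tau_range[OF r r'] s by auto
      also have "\<dots> \<le> f s" using mono[of "max (s - \<tau> r r') 0" s] tau_range[OF r r'] s by auto
      finally show "\<bar>V (s - \<tau> r r') r' - W (s - \<tau> r r') r'\<bar> \<le> f s" .
    qed
    moreover have "\<bar>- \<alpha> * (V s r - W s r)\<bar> \<le> \<alpha> * f s"
      using bd[of s r] s r h_nonneg alpha_nonneg by (auto simp: abs_mult intro: mult_left_mono)
    moreover have "F V s r - F W s r = - \<alpha> * (V s r - W s r) + (G V s r - G W s r)"
      by (simp add: F_def algebra_simps)
    ultimately show "norm (F V s r - F W s r) \<le> c * f s"
      unfolding c_def by (simp add: distrib_right)
  qed
  also have "\<dots> = c * integral {0..t} f" by (rule integral_mult_right)
  finally show ?thesis by simp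
qed

lemma abs_picard_diff_power_le:
  assumes V: "continuous_on ({-h..} \<times> K) (\<lambda>(t, r). V t r)"
    and W: "continuous_on ({-h..} \<times> K) (\<lambda>(t, r). W t r)"
    and k: "0 \<le> k" and t: "-h \<le> t" and r: "r \<in> K"
    and bd: "\<And>s r. s \<in> {-h..t} \<Longrightarrow> r \<in> K \<Longrightarrow> \<bar>V s r - W s r\<bar> \<le> k * max s 0 ^ n"
  shows "\<bar>picard V t r - picard W t r\<bar> \<le> c * k * max t 0 ^ Suc n / Suc n"
proof (cases "t \<le> 0")
  case True
  then show ?thesis using k c_nonneg by (simp add: picard_init)
next
  case False
  have "\<bar>picard V t r - picard W t r\<bar> \<le> c * integral {0..t} (\<lambda>u. k * u ^ n)"
    by (rule abs_picard_diff_le[OF V W _ r])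
       (use False k bd in \<open>auto intro!: continuous_intros mult_left_mono power_mono\<close>)
  also have "\<dots> = c * k * max t 0 ^ Suc n / Suc n"
    using integral_0_power[of t n] False by simp
  finally show ?thesis .
qed

lemma solution_imp_fixed_point:
  assumes sol: "global_solution K \<alpha> J S \<tau> h \<phi> W" and t: "-h \<le> t" and r: "r \<in> K"
  shows "W t r = picard W t r"
proof -
  from sol have Wy: "ycont_on {-h..} K W" and init: "\<And>t r. t \<in> {-h..0} \<Longrightarrow> r \<in> K \<Longrightarrow> W t r = \<phi> t r"
    unfolding global_solution_def by blast+
  from sol obtain W' where W'y: "ycont_on {0..} K W'"
    and der: "\<And>t. t \<ge> 0 \<Longrightarrow> yhas_deriv K W (W' t) t {0..}"
    and eq: "\<And>t r. t \<ge> 0 \<Longrightarrow> r \<in> K \<Longrightarrow> W' t r = F W t r"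
    unfolding global_solution_def F_def by blast
  show ?thesis
  proof (cases "t \<le> 0")
    case True
    then show ?thesis using init t r by (simp add: picard_init)
  next
    case False
    have "((\<lambda>s. W' s r) has_integral (W t r - W 0 r)) {0..t}"
    proof (rule fundamental_theorem_of_calculus)
      fix s assume s: "s \<in> {0..t}"
      have "((\<lambda>s. W s r) has_real_derivative W' s r) (at s within {0..})"
        by (rule yhas_deriv_imp_has_real_derivative[OF K_compact der])
           (use Wy W'y s r h_nonneg in \<open>auto simp: ycont_on_def\<close>)
      then show "((\<lambda>s. W s r) has_vector_derivative W' s r) (at s within {0..t})"
        by (auto intro: DERIV_subset simp: has_real_derivative_iff_has_vector_derivative[symmetric])
    qed (use False in simp)
    then have "W t r = W 0 r + integral {0..t} (\<lambda>s. W' s r)" by (simp add: integral_unique)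
    also have "integral {0..t} (\<lambda>s. W' s r) = integral {0..t} (\<lambda>s. F W s r)"
      by (rule integral_cong) (use eq r in auto)
    also have "W 0 r = \<phi> 0 r" using init r h_nonneg by simp
    finally show ?thesis using False by (simp add: picard_nonneg)
  qed
qed

lemma fixed_point_imp_solution:
  assumes V: "continuous_on ({-h..} \<times> K) (\<lambda>(t, r). V t r)"
    and V_fix: "\<And>t r. -h \<le> t \<Longrightarrow> r \<in> K \<Longrightarrow> V t r = picard V t r"
  shows "global_solution K \<alpha> J S \<tau> h \<phi> V"
  unfolding global_solution_def
proof (intro conjI exI[of _ "F V"] allI impI ballI)
  note ycont = ycont_on_iff_continuous_on_Times[OF K_compact K_nonempty]
  show "ycont_on {-h..} K V" using V ycont by simp
  show "ycont_on {0..} K (F V)" using continuous_on_F[OF V] ycont by simp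
  have V0: "V 0 r = \<phi> 0 r" if "r \<in> K" for r
    using V_fix[OF _ that, of 0] h_nonneg by (simp add: picard_init)
  show "yhas_deriv K V (F V t) t {0..}" if "0 \<le> t" for t
    by (rule yhas_deriv_integral_0[OF K_compact K_nonempty continuous_on_F[OF V] _ that])
       (use V_fix V0 h_nonneg in \<open>auto simp: picard_nonneg\<close>)
  show "F V t r = - \<alpha> * V t r + Gdelay K J S \<tau> V t r" for t r by (simp add: F_def)
  show "V t r = \<phi> t r" if "t \<in> {-h..0}" "r \<in> K" for t r
    using V_fix that by (simp add: picard_init)
qed

lemma fixed_point_diff_bound:
  assumes V: "continuous_on ({-h..} \<times> K) (\<lambda>(t, r). V t r)"
    and W: "continuous_on ({-h..} \<times> K) (\<lambda>(t, r). W t r)"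
    and V_fix: "\<And>t r. -h \<le> t \<Longrightarrow> r \<in> K \<Longrightarrow> V t r = picard V t r"
    and W_fix: "\<And>t r. -h \<le> t \<Longrightarrow> r \<in> K \<Longrightarrow> W t r = picard W t r"
    and E: "E \<ge> 0" "\<And>s r. s \<in> {-h..T} \<Longrightarrow> r \<in> K \<Longrightarrow> \<bar>V s r - W s r\<bar> \<le> E"
    and t: "t \<in> {-h..T}" and r: "r \<in> K"
  shows "\<bar>V t r - W t r\<bar> \<le> E * c ^ n * max t 0 ^ n / fact n"
  using t r
proof (induction n arbitrary: t r)
  case 0
  then show ?case using E by simp
next
  case (Suc n)
  have "\<bar>V t r - W t r\<bar> = \<bar>picard V t r - picard W t r\<bar>" using V_fix W_fix Suc.prems by simp
  also have "\<dots> \<le> c * (E * c ^ n / fact n) * max t 0 ^ Suc n / Suc n"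
    by (rule abs_picard_diff_power_le[OF V W]) (use E c_nonneg Suc in auto)
  finally show ?case by (simp only: fact_Suc_step)
qed

lemma fixed_point_unique:
  assumes V: "continuous_on ({-h..} \<times> K) (\<lambda>(t, r). V t r)"
    and W: "continuous_on ({-h..} \<times> K) (\<lambda>(t, r). W t r)"
    and V_fix: "\<And>t r. -h \<le> t \<Longrightarrow> r \<in> K \<Longrightarrow> V t r = picard V t r"
    and W_fix: "\<And>t r. -h \<le> t \<Longrightarrow> r \<in> K \<Longrightarrow> W t r = picard W t r"
    and t: "-h \<le> t" and r: "r \<in> K"
  shows "V t r = W t r"
proof -
  obtain E where E: "E \<ge> 0" "\<And>p. p \<in> {-h..t} \<times> K \<Longrightarrow> \<bar>(\<lambda>(s, r). V s r - W s r) p\<bar> \<le> E"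
    by (rule continuous_on_compact_abs_bound[of "{-h..t} \<times> K" "\<lambda>(s, r). V s r - W s r"])
       (use K_compact V W in \<open>auto intro!: compact_Times continuous_on_diff
          intro: continuous_on_subset simp: case_prod_beta\<close>)
  have "\<bar>V t r - W t r\<bar> \<le> E * (inverse (fact n) * (c * max t 0) ^ n)" for n
    using fixed_point_diff_bound[OF V W V_fix W_fix E(1), of t t r n] E(2) t r
    by (force simp: divide_inverse power_mult_distrib mult_ac)
  moreover have "(\<lambda>n. E * (inverse (fact n) * (c * max t 0) ^ n)) \<longlonglongrightarrow> 0"
    by (intro tendsto_mult_right_zero summable_LIMSEQ_zero summable_exp)
  ultimately have "\<bar>V t r - W t r\<bar> \<le> 0"
    by (intro LIMSEQ_le_const) auto
  then show ?thesis by simp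
qed

subsection \<open>Existence by Picard iteration\<close>

definition phi_ext :: "real \<Rightarrow> 'a \<Rightarrow> real" where
  "phi_ext t r = \<phi> (max (-h) (min t 0)) r"

definition picard_iter :: "nat \<Rightarrow> real \<Rightarrow> 'a \<Rightarrow> real" where
  "picard_iter n = (picard ^^ n) phi_ext"

lemma picard_iter_0: "picard_iter 0 = phi_ext"
  by (simp add: picard_iter_def)

lemma picard_iter_Suc: "picard_iter (Suc n) = picard (picard_iter n)"
  by (simp add: picard_iter_def)

lemma continuous_on_picard_iter: "continuous_on ({-h..} \<times> K) (\<lambda>(t, r). picard_iter n t r)"
proof (induction n)
  case 0
  have "continuous_on ({-h..} \<times> K) (\<lambda>p. \<phi> (max (-h) (min (fst p) 0)) (snd p))"
    by (rule continuous_on_compose_curried[OF phi_cont])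
       (use h_nonneg in \<open>auto intro!: continuous_intros\<close>)
  then show ?case by (simp add: picard_iter_0 phi_ext_def case_prod_beta)
next
  case (Suc n)
  then show ?case unfolding picard_iter_Suc by (rule continuous_on_picard)
qed

lemma picard_iter_init: "-h \<le> t \<Longrightarrow> t \<le> 0 \<Longrightarrow> picard_iter n t r = \<phi> t r"
  by (cases n) (simp_all add: picard_iter_0 phi_ext_def picard_iter_Suc picard_init)

lemma abs_F_phi_ext_le:
  obtains B where "B \<ge> 0" "\<And>u r. 0 \<le> u \<Longrightarrow> r \<in> K \<Longrightarrow> \<bar>F phi_ext u r\<bar> \<le> B"
proof -
  obtain M where M: "M \<ge> 0" "\<And>p. p \<in> {-h..0} \<times> K \<Longrightarrow> \<bar>(\<lambda>(t, r). \<phi> t r) p\<bar> \<le> M"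
    by (rule continuous_on_compact_abs_bound[OF _ phi_cont]) (use K_compact in \<open>auto intro: compact_Times\<close>)
  have "\<bar>F phi_ext u r\<bar> \<le> \<alpha> * M + MJ * MS * measure lebesgue K" if u: "0 \<le> u" and r: "r \<in> K" for u r
  proof -
    have "\<bar>phi_ext u r\<bar> \<le> M" using M(2)[of "(0, r)"] u r h_nonneg by (simp add: phi_ext_def)
    then have "\<bar>- \<alpha> * phi_ext u r\<bar> \<le> \<alpha> * M"
      using alpha_nonneg by (simp add: abs_mult mult_left_mono)
    moreover have "\<bar>G phi_ext u r\<bar> \<le> MJ * MS * measure lebesgue K"
      by (rule abs_G_le[OF continuous_on_picard_iter[of 0, unfolded picard_iter_0] r])
         (use tau_range[OF r] u in force)
    ultimately show ?thesis unfolding F_def by linarith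
  qed
  moreover have "\<alpha> * M + MJ * MS * measure lebesgue K \<ge> 0"
    using alpha_nonneg M MJ_nonneg MS_nonneg by simp
  ultimately show ?thesis using that by blast
qed

lemma picard_iter_diff_bound:
  obtains B where "B \<ge> 0" "\<And>n t r. -h \<le> t \<Longrightarrow> r \<in> K \<Longrightarrow>
    \<bar>picard_iter (Suc n) t r - picard_iter n t r\<bar> \<le> B * c ^ n * max t 0 ^ Suc n / fact (Suc n)"
proof -
  obtain B where B: "B \<ge> 0" and F_bound: "\<And>u r. 0 \<le> u \<Longrightarrow> r \<in> K \<Longrightarrow> \<bar>F phi_ext u r\<bar> \<le> B"
    using abs_F_phi_ext_le by blast
  have "\<bar>picard_iter (Suc n) t r - picard_iter n t r\<bar> \<le> B * c ^ n * max t 0 ^ Suc n / fact (Suc n)"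
    if "-h \<le> t" "r \<in> K" for n t r
    using that
  proof (induction n arbitrary: t r)
    case 0
    show ?case
    proof (cases "t \<le> 0")
      case True
      then show ?thesis using 0 B by (simp add: picard_iter_init)
    next
      case False
      have "norm (integral {0..t} (\<lambda>u. F phi_ext u r)) \<le> B * (t - 0)"
        by (rule Henstock_Kurzweil_Integration.integral_bound)
           (use False F_bound[OF _ 0(2)]
             continuous_on_F_slice[OF continuous_on_picard_iter[of 0, unfolded picard_iter_0] 0(2)]
             in auto)
      then show ?thesis
        using False h_nonneg by (simp add: picard_iter_Suc picard_iter_0 picard_nonneg phi_ext_def)
    qed
  next
    case (Suc n)
    have "\<bar>picard_iter (Suc (Suc n)) t r - picard_iter (Suc n) t r\<bar>
        \<le> c * (B * c ^ n / fact (Suc n)) * max t 0 ^ Suc (Suc n) / Suc (Suc n)"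
      unfolding picard_iter_Suc[of "Suc n"] picard_iter_Suc[of n]
      by (rule abs_picard_diff_power_le[OF continuous_on_picard continuous_on_picard_iter])
         (use Suc B c_nonneg in \<open>auto simp: picard_iter_Suc continuous_on_picard_iter\<close>)
    then show ?case by (simp only: fact_Suc_step)
  qed
  with B that show ?thesis by blast
qed

lemma uniform_limit_picard_iter:
  "uniform_limit ({-h..T} \<times> K) (\<lambda>n (t, r). picard_iter n t r)
     (\<lambda>(t, r). phi_ext t r + (\<Sum>i. picard_iter (Suc i) t r - picard_iter i t r)) sequentially"
proof -
  obtain B where B: "B \<ge> 0" "\<And>n t r. -h \<le> t \<Longrightarrow> r \<in> K \<Longrightarrow>
      \<bar>picard_iter (Suc n) t r - picard_iter n t r\<bar> \<le> B * c ^ n * max t 0 ^ Suc n / fact (Suc n)"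
    using picard_iter_diff_bound by blast
  define D where "D i = (\<lambda>(t, r). picard_iter (Suc i) t r - picard_iter i t r)" for i
  define T' where "T' = max T 0"
  have "uniform_limit ({-h..T} \<times> K) (\<lambda>n p. \<Sum>i<n. D i p) (\<lambda>p. \<Sum>i. D i p) sequentially"
  proof (rule Weierstrass_m_test)
    show "norm (D i p) \<le> B * c ^ i * T' ^ Suc i / fact (Suc i)" if "p \<in> {-h..T} \<times> K" for i p
    proof -
      have "\<bar>D i p\<bar> \<le> B * c ^ i * max (fst p) 0 ^ Suc i / fact (Suc i)"
        using B(2)[of "fst p" "snd p" i] that by (auto simp: D_def case_prod_beta)
      also have "\<dots> \<le> B * c ^ i * T' ^ Suc i / fact (Suc i)"
        using that B(1) c_nonneg unfolding T'_def
        by (intro divide_right_mono mult_left_mono power_mono) auto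
      finally show ?thesis by simp
    qed
    show "summable (\<lambda>i. B * c ^ i * T' ^ Suc i / fact (Suc i))"
      using B(1) c_nonneg unfolding T'_def by (intro summable_exp_majorant) auto
  qed
  then have "uniform_limit ({-h..T} \<times> K) (\<lambda>n p. phi_ext (fst p) (snd p) + (\<Sum>i<n. D i p))
      (\<lambda>p. phi_ext (fst p) (snd p) + (\<Sum>i. D i p)) sequentially"
    by (intro uniform_limit_intros)
  moreover have "(\<Sum>i<n. D i p) = picard_iter n (fst p) (snd p) - phi_ext (fst p) (snd p)" for n p
    using sum_lessThan_telescope[of "\<lambda>i. picard_iter i (fst p) (snd p)" n]
    by (simp add: D_def picard_iter_0 case_prod_beta)
  ultimately show ?thesis by (simp add: D_def split_def)
qed

lemma picard_iter_uniform_limit: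
  obtains V where "continuous_on ({-h..} \<times> K) (\<lambda>(t, r). V t r)"
    "\<And>T. uniform_limit ({-h..T} \<times> K) (\<lambda>n (t, r). picard_iter n t r) (\<lambda>(t, r). V t r) sequentially"
proof -
  define V where "V t r = phi_ext t r + (\<Sum>i. picard_iter (Suc i) t r - picard_iter i t r)" for t r
  have lim: "uniform_limit ({-h..T} \<times> K) (\<lambda>n (t, r). picard_iter n t r) (\<lambda>(t, r). V t r) sequentially"
    for T unfolding V_def by (rule uniform_limit_picard_iter)
  have "continuous_on ({-h..} \<times> K) (\<lambda>(t, r). V t r)"
  proof (rule continuous_on_atLeast_Times)
    show "continuous_on ({-h..T} \<times> K) (\<lambda>(t, r). V t r)" for T
      by (rule uniform_limit_theorem[OF _ lim])
         (intro always_eventually allI continuous_on_subset[OF continuous_on_picard_iter], auto)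
  qed
  with lim that show ?thesis by blast
qed

lemma uniform_limit_picard_iter_fixed_point:
  assumes V: "continuous_on ({-h..} \<times> K) (\<lambda>(t, r). V t r)"
    and lim: "\<And>T. uniform_limit ({-h..T} \<times> K) (\<lambda>n (t, r). picard_iter n t r) (\<lambda>(t, r). V t r) sequentially"
    and t: "-h \<le> t" and r: "r \<in> K"
  shows "V t r = picard V t r"
proof -
  define C where "C = c * max t 0 + 1"
  have C: "C > 0" unfolding C_def using c_nonneg by (simp add: add_nonneg_pos)
  have "\<bar>picard V t r - V t r\<bar> \<le> 0 + e" if e: "e > 0" for e
  proof -
    obtain N where N: "\<And>n s r. N \<le> n \<Longrightarrow> s \<in> {-h..t} \<Longrightarrow> r \<in> K \<Longrightarrow>
        \<bar>picard_iter n s r - V s r\<bar> < e / C"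
      using uniform_limitD[OF lim[of t], of "e / C"] e C
      by (fastforce simp: eventually_sequentially dist_real_def)
    have "\<bar>picard V t r - picard (picard_iter N) t r\<bar> \<le> c * (e / C) * max t 0 ^ Suc 0 / Suc 0"
      by (rule abs_picard_diff_power_le[OF V continuous_on_picard_iter _ t r])
         (use N[of N] e C in \<open>force simp: abs_minus_commute\<close>)+
    moreover have "\<bar>picard (picard_iter N) t r - V t r\<bar> < e / C"
      using N[of "Suc N" t r] t r by (simp add: picard_iter_Suc)
    ultimately have "\<bar>picard V t r - V t r\<bar> \<le> (c * max t 0 + 1) * (e / C)"
      by (simp add: algebra_simps)
    then show ?thesis using C by (simp add: C_def)
  qed
  then show ?thesis using field_le_epsilon[of "\<bar>picard V t r - V t r\<bar>" 0] by simp
qed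

theorem exists_unique_solution:
  "\<exists>V. global_solution K \<alpha> J S \<tau> h \<phi> V \<and>
       (\<forall>W. global_solution K \<alpha> J S \<tau> h \<phi> W \<longrightarrow> (\<forall>t\<ge>-h. \<forall>r\<in>K. W t r = V t r))"
proof -
  obtain V where V: "continuous_on ({-h..} \<times> K) (\<lambda>(t, r). V t r)"
    and lim: "\<And>T. uniform_limit ({-h..T} \<times> K) (\<lambda>n (t, r). picard_iter n t r) (\<lambda>(t, r). V t r) sequentially"
    using picard_iter_uniform_limit by blast
  note V_fix = uniform_limit_picard_iter_fixed_point[OF V lim]
  have "W t r = V t r" if W: "global_solution K \<alpha> J S \<tau> h \<phi> W" and "-h \<le> t" "r \<in> K" for W t r
  proof (rule fixed_point_unique[OF _ V solution_imp_fixed_point[OF W] V_fix])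
    show "continuous_on ({-h..} \<times> K) (\<lambda>(t, r). W t r)"
      using W ycont_on_iff_continuous_on_Times[OF K_compact K_nonempty]
      by (simp add: global_solution_def)
  qed (use that in auto)
  then show ?thesis using fixed_point_imp_solution[OF V V_fix] by blast
qed

end

theorem corollary2p7:
  fixes \<Omega> :: "'a::euclidean_space set"
    and J \<tau> :: "'a \<Rightarrow> 'a \<Rightarrow> real" and S :: "real \<Rightarrow> real" and \<alpha> h :: real
    and \<phi> :: "real \<Rightarrow> 'a \<Rightarrow> real"
  assumes "\<Omega> \<noteq> {}" "bounded \<Omega>" "connected \<Omega>" "open \<Omega>"
    and "continuous_on (closure \<Omega> \<times> closure \<Omega>) (\<lambda>(r, r'). J r r')"
    and "\<And>k x. (deriv ^^ k) S differentiable (at x)"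
    and "\<And>k. bounded (range ((deriv ^^ k) S))"
    and "continuous_on (closure \<Omega> \<times> closure \<Omega>) (\<lambda>(r, r'). \<tau> r r')"
    and "\<And>r r'. r \<in> closure \<Omega> \<Longrightarrow> r' \<in> closure \<Omega> \<Longrightarrow> \<tau> r r' \<ge> 0"
    and "\<exists>r\<in>closure \<Omega>. \<exists>r'\<in>closure \<Omega>. \<tau> r r' \<noteq> 0"
    and "\<alpha> > 0"
    and "h = (SUP p\<in>closure \<Omega> \<times> closure \<Omega>. \<tau> (fst p) (snd p))"
    and "ycont_on {-h..0} (closure \<Omega>) \<phi>"
  shows "\<exists>V. global_solution (closure \<Omega>) \<alpha> J S \<tau> h \<phi> V \<and>
           (\<forall>W. global_solution (closure \<Omega>) \<alpha> J S \<tau> h \<phi> W \<longrightarrow>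
                (\<forall>t\<ge>-h. \<forall>r\<in>closure \<Omega>. W t r = V t r))"
proof -
  let ?K = "closure \<Omega>"
  have K: "compact ?K" "?K \<noteq> {}" using assms(1,2) by (auto simp: compact_closure)
  have KK: "compact (?K \<times> ?K)" using K by (intro compact_Times)
  obtain MJ where MJ: "\<And>p. p \<in> ?K \<times> ?K \<Longrightarrow> \<bar>(\<lambda>(r, r'). J r r') p\<bar> \<le> MJ"
    using continuous_on_compact_abs_bound[OF KK assms(5)] by metis
  obtain MS where MS: "\<And>x. \<bar>S x\<bar> \<le> MS" using assms(7)[of 0] by (auto simp: bounded_iff)
  obtain LS where LS: "LS-lipschitz_on UNIV S"
    using bounded_deriv_imp_lipschitz_on[of S] assms(6)[of 0] assms(7)[of 1] by auto
  have tau_le_h: "\<tau> r r' \<le> h" if "r \<in> ?K" "r' \<in> ?K" for r r'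
    using continuous_on_compact_le_SUP[of "?K \<times> ?K" "\<lambda>p. \<tau> (fst p) (snd p)" "(r, r')"]
      KK assms(8,12) that by (simp add: case_prod_beta)
  interpret delay_problem ?K J \<tau> S \<alpha> h MJ MS LS \<phi>
    using K assms(5,8,9,11,13) MJ MS LS tau_le_h ycont_on_iff_continuous_on_Times[OF K]
    by unfold_locales fastforce+
  show ?thesis by (rule exists_unique_solution)
qed

end
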